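(* Every extended Runge--Kutta method is affine equivariant: if $a(x)=Ax+b$ is an affine map from $\mathbb{R}^p$ to $\mathbb{R}^n$, $f$ is a vector field on $\mathbb{R}^p$ and $g$ a vector field on $\mathbb{R}^n$ with $g(Ax+b)=Af(x)$ for all $x\in\mathbb{R}^p$, then $a\circ\Phi_h(f)=\Phi_h(g)\circ a$, where $\Phi_h(f)$ denotes the step map $z_0\mapsto z_1$ of the extended Runge--Kutta method applied to $\dot z=f(z)$ (whenever these step maps are well defined).
   Context: Fix integers $m\ge s\ge1$, real coefficients $a_{ij}$ ($1\le i\le s$, $1\le j\le m$), $b_i$ ($1\le i\le m$), and a full-rank $(m-s)\times m$ real matrix $(d_{ij})$. For an ODE $\dot z=f(z)$ on $\mathbb{R}^n$, the extended Runge--Kutta method with these parameters maps $z_0$ to $z_1$ defined by the equations, with unknowns $k_1,\dots,k_m\in\mathbb{R}^n$: $Z_i=z_0+h\sum_{j=1}^m a_{ij}k_j$ ($i=1,\dots,s$), $k_i=f(Z_i)$ ($i=1,\dots,s$), $0=\sum_{j=1}^m d_{ij}k_j$ ($i=1,\dots,m-s$), and $z_1=z_0+h\sum_{i=1}^m b_ik_i$. The same parameters are used for vector fields in every dimension. *)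

theory Defs
  imports "HOL-Analysis.Analysis"
begin

text \<open>Parameters of an extended Runge--Kutta method: integers m \<ge> s \<ge> 1,
  coefficients a i j (1 \<le> i \<le> s, 1 \<le> j \<le> m), weights b i (1 \<le> i \<le> m),
  and a full-rank (m-s) x m matrix d i j. Indices start at 1.\<close>

definition erk_params ::
  "nat \<Rightarrow> nat \<Rightarrow> (nat \<Rightarrow> nat \<Rightarrow> real) \<Rightarrow> (nat \<Rightarrow> real) \<Rightarrow> (nat \<Rightarrow> nat \<Rightarrow> real) \<Rightarrow> bool" where
  "erk_params s m a b d \<longleftrightarrow> 1 \<le> s \<and> s \<le> m \<and>
     \<comment> \<open>full rank (m-s) x m: the rows of d are linearly independent\<close>
     (\<forall>c :: nat \<Rightarrow> real. (\<forall>j\<in>{1..m}. (\<Sum>i=1..m-s. c i * d i j) = 0)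
        \<longrightarrow> (\<forall>i\<in>{1..m-s}. c i = 0))"

definition erk_step ::
  "nat \<Rightarrow> nat \<Rightarrow> (nat \<Rightarrow> nat \<Rightarrow> real) \<Rightarrow> (nat \<Rightarrow> real) \<Rightarrow> (nat \<Rightarrow> nat \<Rightarrow> real) \<Rightarrow> real
    \<Rightarrow> ('v::real_vector \<Rightarrow> 'v) \<Rightarrow> 'v \<Rightarrow> 'v \<Rightarrow> bool" where
  "erk_step s m a b d h f z0 z1 \<longleftrightarrow>
     (\<exists>k :: nat \<Rightarrow> 'v.
        (\<forall>i\<in>{1..s}. k i = f (z0 + h *\<^sub>R (\<Sum>j=1..m. a i j *\<^sub>R k j))) \<and>
        (\<forall>i\<in>{1..m-s}. (\<Sum>j=1..m. d i j *\<^sub>R k j) = 0) \<and>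
        z1 = z0 + h *\<^sub>R (\<Sum>i=1..m. b i *\<^sub>R k i))"

definition erk_well_defined ::
  "nat \<Rightarrow> nat \<Rightarrow> (nat \<Rightarrow> nat \<Rightarrow> real) \<Rightarrow> (nat \<Rightarrow> real) \<Rightarrow> (nat \<Rightarrow> nat \<Rightarrow> real) \<Rightarrow> real
    \<Rightarrow> ('v::real_vector \<Rightarrow> 'v) \<Rightarrow> 'v \<Rightarrow> bool" where
  "erk_well_defined s m a b d h f z0 \<longleftrightarrow> (\<exists>!z1. erk_step s m a b d h f z0 z1)"

definition erk_map ::
  "nat \<Rightarrow> nat \<Rightarrow> (nat \<Rightarrow> nat \<Rightarrow> real) \<Rightarrow> (nat \<Rightarrow> real) \<Rightarrow> (nat \<Rightarrow> nat \<Rightarrow> real) \<Rightarrow> real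
    \<Rightarrow> ('v::real_vector \<Rightarrow> 'v) \<Rightarrow> 'v \<Rightarrow> 'v" where
  "erk_map s m a b d h f z0 = (THE z1. erk_step s m a b d h f z0 z1)"

end

theory Submission
  imports Defs
begin

(* If the stages k_1, ..., k_m solve the step equations for f from z0, then, since the
   equations are linear in the k_j and the intertwining relation g (A x + c) = A (f x) turns
   f-evaluations into g-evaluations, the mapped stages A k_1, ..., A k_m solve them for g from
   A z0 + c, with result A z1 + c. Uniqueness of the step results gives the commutation. *)

lemma erk_step_affine_image:
  fixes L :: "'u::real_vector \<Rightarrow> 'v::real_vector"
  assumes "linear L"
    and intertwine: "\<And>x. g (L x + c) = L (f x)"
    and "erk_step s m a b d h f z0 z1"
  shows "erk_step s m a b d h g (L z0 + c) (L z1 + c)"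
proof -
  interpret L: linear L by fact
  obtain k where stages: "\<forall>i\<in>{1..s}. k i = f (z0 + h *\<^sub>R (\<Sum>j=1..m. a i j *\<^sub>R k j))"
    and constraints: "\<forall>i\<in>{1..m-s}. (\<Sum>j=1..m. d i j *\<^sub>R k j) = 0"
    and result: "z1 = z0 + h *\<^sub>R (\<Sum>i=1..m. b i *\<^sub>R k i)"
    using assms(3) unfolding erk_step_def by blast
  show ?thesis
    unfolding erk_step_def
  proof (intro exI[of _ "L \<circ> k"] conjI ballI)
    fix i assume "i \<in> {1..s}"
    then have "(L \<circ> k) i = L (f (z0 + h *\<^sub>R (\<Sum>j=1..m. a i j *\<^sub>R k j)))"
      using stages by simp
    also have "\<dots> = g (L (z0 + h *\<^sub>R (\<Sum>j=1..m. a i j *\<^sub>R k j)) + c)"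
      by (rule intertwine[symmetric])
    also have "L (z0 + h *\<^sub>R (\<Sum>j=1..m. a i j *\<^sub>R k j)) + c
        = L z0 + c + h *\<^sub>R (\<Sum>j=1..m. a i j *\<^sub>R (L \<circ> k) j)"
      by (simp add: L.add L.scale L.sum)
    finally show "(L \<circ> k) i = g (L z0 + c + h *\<^sub>R (\<Sum>j=1..m. a i j *\<^sub>R (L \<circ> k) j))" .
  next
    fix i assume "i \<in> {1..m-s}"
    have "(\<Sum>j=1..m. d i j *\<^sub>R (L \<circ> k) j) = L (\<Sum>j=1..m. d i j *\<^sub>R k j)"
      by (simp add: L.sum L.scale)
    with \<open>i \<in> {1..m-s}\<close> show "(\<Sum>j=1..m. d i j *\<^sub>R (L \<circ> k) j) = 0"
      using constraints L.zero by simp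
  next
    show "L z1 + c = L z0 + c + h *\<^sub>R (\<Sum>i=1..m. b i *\<^sub>R (L \<circ> k) i)"
      by (simp add: result L.add L.scale L.sum)
  qed
qed

lemma erk_map_eqI:
  assumes "erk_well_defined s m a b d h f z0"
    and "erk_step s m a b d h f z0 z1"
  shows "erk_map s m a b d h f z0 = z1"
  using assms unfolding erk_well_defined_def erk_map_def by (metis the_equality)

lemma erk_step_erk_map:
  assumes "erk_well_defined s m a b d h f z0"
  shows "erk_step s m a b d h f z0 (erk_map s m a b d h f z0)"
  using assms unfolding erk_well_defined_def erk_map_def by (rule theI')

theorem proposition2:
  fixes s m :: nat and a :: "nat \<Rightarrow> nat \<Rightarrow> real" and b :: "nat \<Rightarrow> real"
    and d :: "nat \<Rightarrow> nat \<Rightarrow> real" and h :: real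
    and A :: "real^'p^'n" and c :: "real^'n"
    and f :: "real^'p \<Rightarrow> real^'p" and g :: "real^'n \<Rightarrow> real^'n"
    and z0 :: "real^'p"
  assumes "erk_params s m a b d"
    and "\<And>x. g (A *v x + c) = A *v f x"
    and "erk_well_defined s m a b d h f z0"
    and "erk_well_defined s m a b d h g (A *v z0 + c)"
  shows "A *v erk_map s m a b d h f z0 + c = erk_map s m a b d h g (A *v z0 + c)"
proof -
  have "erk_step s m a b d h g (A *v z0 + c) (A *v erk_map s m a b d h f z0 + c)"
    using matrix_vector_mul_linear assms(2) erk_step_erk_map[OF assms(3)]
    by (rule erk_step_affine_image)
  then show ?thesis
    using erk_map_eqI[OF assms(4)] by simp
qed

end
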